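(* Let $V=\{1,\ldots,p\}$ and let $\mathbf{X}_V$ be a random vector with positive definite covariance matrix $\Sigma=\{\sigma_{uv}\}_{u,v\in V}$ and concentration matrix $K=\Sigma^{-1}=\{\kappa_{uv}\}_{u,v\in V}$. Suppose $K$ implies the undirected graph $\mathcal{G}=(V,\mathcal{E})$. Then for every edge $\{x,y\}\in\mathcal{E}$, $$\omega(\langle x,y\rangle,\Sigma)=\frac{\sigma_{xy\cdot V\setminus\{x,y\}}}{1-\rho^{2}_{\{x,y\}\mid V\setminus\{x,y\}}},$$ where $\sigma_{xy\cdot V\setminus\{x,y\}}$ is the $(x,y)$ entry of the partial covariance matrix $\Sigma_{\{x,y\}\{x,y\}\cdot V\setminus\{x,y\}}$ and $\rho_{\{x,y\}\mid V\setminus\{x,y\}}$ is the vector correlation coefficient between $\mathbf{X}_{\{x,y\}}$ and $\mathbf{X}_{V\setminus\{x,y\}}$.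
   Context: For $A,B\subseteq V$ disjoint, $\Sigma_{AB}$ denotes the submatrix of $\Sigma$ with rows $A$, columns $B$; $\Sigma_{AA}^{-1}$ means $(\Sigma_{AA})^{-1}$; the partial covariance matrix is $\Sigma_{AA\cdot B}=\Sigma_{AA}-\Sigma_{AB}\Sigma_{BB}^{-1}\Sigma_{BA}$ (equal to $\Sigma_{AA}$ if $B=\emptyset$). $K$ implies an undirected graph $\mathcal{G}=(V,\mathcal{E})$ (no self-loops) if every nonzero off-diagonal entry $\kappa_{uv}$ corresponds to an edge $\{u,v\}\in\mathcal{E}$. A path between $x$ and $y$ is a sequence $\pi=\langle x=v_1,\ldots,v_k=y\rangle$ of $k\ge2$ distinct vertices with consecutive vertices adjacent; $V(\pi)$ and $\mathcal{E}(\pi)$ denote its vertex and edge sets. For a positive definite matrix $\Gamma$ indexed by $V$ and a path $\pi$ with $P=V(\pi)$, the path weight is $\omega(\pi,\Gamma)=(-1)^{|P|+1}\,|\Gamma_{PP}|\prod_{\{u,v\}\in\mathcal{E}(\pi)}\{\Gamma^{-1}\}_{uv}$, where $|\cdot|$ of a matrix is the determinant. For disjoint $A,B$, the vector alienation coefficient is $\lambda_{A\mid B}=|\Sigma_{A\cup B\,A\cup B}|/(|\Sigma_{AA}|\,|\Sigma_{BB}|)$ and the vector correlation coefficient is $\rho_{A\mid B}=\sqrt{1-\lambda_{A\mid B}}$, with the convention $\rho_{A\mid B}=0$ if $A=\emptyset$ or $B=\emptyset$. *)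

theory Defs
  imports "HOL-Combinatorics.Permutations" Complex_Main
begin

text \<open>Matrices are represented as functions of type nat => nat => real, considered
  on an explicit finite index set.  For a set S, the submatrix M_SS is M restricted to S.\<close>

definition det_on :: "nat set \<Rightarrow> (nat \<Rightarrow> nat \<Rightarrow> real) \<Rightarrow> real" where
  "det_on S M = (\<Sum>\<sigma> | \<sigma> permutes S. of_int (sign \<sigma>) * (\<Prod>i\<in>S. M i (\<sigma> i)))"

definition inv_on :: "nat set \<Rightarrow> (nat \<Rightarrow> nat \<Rightarrow> real) \<Rightarrow> (nat \<Rightarrow> nat \<Rightarrow> real)" where
  "inv_on S M = (THE B. (\<forall>i\<in>S. \<forall>j\<in>S. (\<Sum>k\<in>S. M i k * B k j) = (if i = j then 1 else 0))
                      \<and> (\<forall>i j. i \<notin> S \<or> j \<notin> S \<longrightarrow> B i j = 0))"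

definition pos_def_on :: "nat set \<Rightarrow> (nat \<Rightarrow> nat \<Rightarrow> real) \<Rightarrow> bool" where
  "pos_def_on V M \<longleftrightarrow> (\<forall>i\<in>V. \<forall>j\<in>V. M i j = M j i) \<and>
     (\<forall>z :: nat \<Rightarrow> real. (\<exists>i\<in>V. z i \<noteq> 0) \<longrightarrow> (\<Sum>i\<in>V. \<Sum>j\<in>V. z i * M i j * z j) > 0)"

text \<open>Partial covariance matrix Sigma_{AA.B} (its entries for indices in A).\<close>
definition partial_cov :: "(nat \<Rightarrow> nat \<Rightarrow> real) \<Rightarrow> nat set \<Rightarrow> nat \<Rightarrow> nat \<Rightarrow> real" where
  "partial_cov M B i j = M i j - (\<Sum>k\<in>B. \<Sum>l\<in>B. M i k * inv_on B M k l * M l j)"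

definition alienation :: "(nat \<Rightarrow> nat \<Rightarrow> real) \<Rightarrow> nat set \<Rightarrow> nat set \<Rightarrow> real" where
  "alienation M A B = det_on (A \<union> B) M / (det_on A M * det_on B M)"

definition vec_corr :: "(nat \<Rightarrow> nat \<Rightarrow> real) \<Rightarrow> nat set \<Rightarrow> nat set \<Rightarrow> real" where
  "vec_corr M A B = (if A = {} \<or> B = {} then 0 else sqrt (1 - alienation M A B))"

text \<open>Path weight omega(pi, Gamma), Gamma indexed by V; the edges of the path are the
  consecutive pairs of the (distinct) vertex list, and (Gamma^{-1})_{uv} is taken in the
  full matrix Gamma_VV.\<close>
definition path_weight :: "nat set \<Rightarrow> nat list \<Rightarrow> (nat \<Rightarrow> nat \<Rightarrow> real) \<Rightarrow> real" where
  "path_weight V \<pi> \<Gamma> = (-1) ^ (card (set \<pi>) + 1) * det_on (set \<pi>) \<Gamma> *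
      prod_list (map (\<lambda>(u, v). inv_on V \<Gamma> u v) (zip \<pi> (tl \<pi>)))"

end

theory Submission
  imports Defs "Jordan_Normal_Form.Determinant"
begin

text \<open>Write A = {x, y}, B = V - A and P for the partial covariance matrix \<Sigma>_{AA.B}.
  Two Schur complement facts carry the proof: det \<Sigma> = det \<Sigma>_BB * det P, and the A-block of
  K = \<Sigma>^-1 is P^-1.  For the 2x2 matrix P the latter gives \<kappa>_xy = - p_xy / det P, hence
  \<omega>(<x,y>, \<Sigma>) = - det \<Sigma>_AA * \<kappa>_xy = p_xy * det \<Sigma>_AA / det P, and the former gives
  \<lambda> = det P / det \<Sigma>_AA.  It remains to see \<lambda> \<le> 1, so that 1 - \<rho>^2 = \<lambda>: the difference
  \<Sigma>_AA - P = \<Sigma>_AB \<Sigma>_BB^-1 \<Sigma>_BA is positive semidefinite, and the determinant of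
  2x2 positive definite matrices is monotone in the Loewner order.\<close>

definition reindexed_mat :: "(nat \<Rightarrow> nat) \<Rightarrow> nat \<Rightarrow> (nat \<Rightarrow> nat \<Rightarrow> real) \<Rightarrow> real mat" where
  "reindexed_mat f n M = mat n n (\<lambda>(i, j). M (f i) (f j))"

lemma det_on_eq_det_reindexed_mat:
  assumes f: "bij_betw f {0..<n} S"
  shows "det_on S M = det (reindexed_mat f n M)"
proof -
  let ?g = "inv_into {0..<n} f"
  let ?h = "\<lambda>\<pi> x. if x \<in> S then f (\<pi> (?g x)) else x"
  have bh: "bij_betw ?h {\<pi>. \<pi> permutes {0..<n}} {\<pi>. \<pi> permutes S}"
    by (rule bij_betw_permutations[OF f])
  have "det_on S M = (\<Sum>\<pi> | \<pi> permutes {0..<n}. of_int (sign (?h \<pi>)) * (\<Prod>i\<in>S. M i (?h \<pi> i)))"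
    unfolding det_on_def by (rule sum.reindex_bij_betw[OF bh, symmetric])
  also have "\<dots> = (\<Sum>\<pi> | \<pi> permutes {0..<n}. of_int (sign \<pi>) * (\<Prod>i = 0..<n. M (f i) (f (\<pi> i))))"
  proof (rule sum.cong[OF refl])
    fix \<pi> assume "\<pi> \<in> {\<pi>. \<pi> permutes {0..<n}}"
    hence p: "\<pi> permutes {0..<n}" by simp
    have sign: "sign (?h \<pi>) = sign \<pi>"
    proof -
      interpret permutes_bij_finite \<pi> "{0..<n}" S f ?g "?h \<pi>"
        by unfold_locales (use p f in \<open>auto simp: bij_betw_inv_into_left\<close>)
      show ?thesis using sign_p' by simp
    qed
    have "(\<Prod>i\<in>S. M i (?h \<pi> i)) = (\<Prod>i = 0..<n. M (f i) (?h \<pi> (f i)))"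
      by (rule prod.reindex_bij_betw[OF f, symmetric])
    also have "\<dots> = (\<Prod>i = 0..<n. M (f i) (f (\<pi> i)))"
      using f by (intro prod.cong refl) (auto simp: bij_betw_inv_into_left bij_betwE)
    finally show "of_int (sign (?h \<pi>)) * (\<Prod>i\<in>S. M i (?h \<pi> i))
        = of_int (sign \<pi>) * (\<Prod>i = 0..<n. M (f i) (f (\<pi> i)))"
      using sign by simp
  qed
  also have "\<dots> = det (reindexed_mat f n M)"
    unfolding det_def reindexed_mat_def
    by (auto intro!: sum.cong prod.cong simp: permutes_in_image)
  finally show ?thesis .
qed

lemma reindexed_mat_mult:
  assumes f: "bij_betw f {0..<n} S"
  shows "reindexed_mat f n (\<lambda>i j. \<Sum>k\<in>S. M i k * N k j) = reindexed_mat f n M * reindexed_mat f n N"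
proof (rule eq_matI)
  fix i j assume "i < dim_row (reindexed_mat f n M * reindexed_mat f n N)"
    "j < dim_col (reindexed_mat f n M * reindexed_mat f n N)"
  hence "i < n" "j < n" by (auto simp: reindexed_mat_def)
  moreover have "(\<Sum>k\<in>S. M (f i) k * N k (f j)) = (\<Sum>l = 0..<n. M (f i) (f l) * N (f l) (f j))"
    by (rule sum.reindex_bij_betw[OF f, symmetric])
  ultimately show "reindexed_mat f n (\<lambda>i j. \<Sum>k\<in>S. M i k * N k j) $$ (i, j)
      = (reindexed_mat f n M * reindexed_mat f n N) $$ (i, j)"
    by (simp add: reindexed_mat_def scalar_prod_def)
qed (auto simp: reindexed_mat_def)

lemma reindexed_mat_id:
  assumes "inj_on f {0..<n}"
  shows "reindexed_mat f n (\<lambda>i j. if i = j then 1 else 0) = 1\<^sub>m n"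
  by (rule eq_matI) (auto simp: reindexed_mat_def inj_on_eq_iff[OF assms])

lemma reindexed_mat_eqD:
  assumes f: "bij_betw f {0..<n} S" and eq: "reindexed_mat f n M = reindexed_mat f n N"
    and "i \<in> S" "j \<in> S"
  shows "M i j = N i j"
proof -
  let ?g = "inv_into {0..<n} f"
  have "?g i < n" "?g j < n" "f (?g i) = i" "f (?g j) = j"
    using f \<open>i \<in> S\<close> \<open>j \<in> S\<close> by (auto simp: bij_betw_inv_into_right dest: bij_betwE[OF bij_betw_inv_into])
  thus ?thesis
    using arg_cong[OF eq, of "\<lambda>A. A $$ (?g i, ?g j)"] by (simp add: reindexed_mat_def)
qed

lemma det_on_cong:
  assumes "\<And>i j. i \<in> S \<Longrightarrow> j \<in> S \<Longrightarrow> M i j = N i j"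
  shows "det_on S M = det_on S N"
  unfolding det_on_def
  by (intro sum.cong refl arg_cong2[where f="(*)"] prod.cong) (auto simp: assms permutes_in_image)

lemma det_on_empty [simp]: "det_on {} M = 1"
  by (simp add: det_on_def)

lemma det_on_singleton: "det_on {s} M = M s s"
  by (simp add: det_on_def)

lemma det_on_doubleton:
  assumes "x \<noteq> y"
  shows "det_on {x, y} M = M x x * M y y - M x y * M y x"
proof -
  have perms: "{\<sigma>. \<sigma> permutes {x, y}} = {id, Transposition.transpose x y}"
    by (auto simp: permutes_insert intro: image_eqI[where x="(x, id)"] image_eqI[where x="(y, id)"])
  have "id \<noteq> Transposition.transpose x y"
    using assms by (metis id_apply transpose_apply_first)
  thus ?thesis
    unfolding det_on_def perms using assms by (simp add: sign_swap_id)
qed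

lemma det_on_mult:
  assumes "finite S"
  shows "det_on S (\<lambda>i j. \<Sum>k\<in>S. M i k * N k j) = det_on S M * det_on S N"
proof -
  obtain f where f: "bij_betw f {0..<card S} S"
    using ex_bij_betw_nat_finite[OF assms] by blast
  show ?thesis
    unfolding det_on_eq_det_reindexed_mat[OF f] reindexed_mat_mult[OF f]
    by (rule det_mult[where n="card S"]) (simp_all add: reindexed_mat_def)
qed

lemma det_on_id:
  assumes "finite S"
  shows "det_on S (\<lambda>i j. if i = j then 1 else 0) = 1"
proof -
  obtain f where f: "bij_betw f {0..<card S} S"
    using ex_bij_betw_nat_finite[OF assms] by blast
  thus ?thesis
    by (simp add: det_on_eq_det_reindexed_mat[OF f] reindexed_mat_id bij_betw_imp_inj_on)
qed

lemma det_on_block_triangular: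
  assumes S: "finite S" "A \<union> B = S" "A \<inter> B = {}"
    and zero: "\<And>a b. a \<in> A \<Longrightarrow> b \<in> B \<Longrightarrow> M a b = 0"
  shows "det_on S M = det_on A M * det_on B M"
proof -
  define nA nB where "nA = card A" and "nB = card B"
  obtain fA where fA: "bij_betw fA {0..<nA} A"
    using ex_bij_betw_nat_finite S unfolding nA_def by blast
  obtain fB where fB: "bij_betw fB {0..<nB} B"
    using ex_bij_betw_nat_finite S unfolding nB_def by blast
  define f where "f = (\<lambda>k. if k < nA then fA k else fB (k - nA))"
  have "bij_betw f {0..<nA} A"
    using fA by (rule bij_betw_cong[THEN iffD1, rotated]) (auto simp: f_def)
  moreover have "bij_betw (fB \<circ> (\<lambda>k. k - nA)) {nA..<nA + nB} B"
    by (rule bij_betw_trans[OF _ fB], rule bij_betw_byWitness[where f'="\<lambda>k. k + nA"]) auto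
  hence "bij_betw f {nA..<nA + nB} B"
    by (rule bij_betw_cong[THEN iffD1, rotated]) (auto simp: f_def)
  ultimately have "bij_betw f ({0..<nA} \<union> {nA..<nA + nB}) (A \<union> B)"
    using bij_betw_combine S(3) by blast
  moreover have "{0..<nA} \<union> {nA..<nA + nB} = {0..<nA + nB}" by auto
  ultimately have f: "bij_betw f {0..<nA + nB} S" using S by simp
  let ?C = "mat nB nA (\<lambda>(i, j). M (fB i) (fA j))"
  have "reindexed_mat f (nA + nB) M
      = four_block_mat (reindexed_mat fA nA M) (0\<^sub>m nA nB) ?C (reindexed_mat fB nB M)"
  proof (rule eq_matI)
    fix i j assume "i < dim_row (four_block_mat (reindexed_mat fA nA M) (0\<^sub>m nA nB) ?C (reindexed_mat fB nB M))"
      "j < dim_col (four_block_mat (reindexed_mat fA nA M) (0\<^sub>m nA nB) ?C (reindexed_mat fB nB M))"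
    hence ij: "i < nA + nB" "j < nA + nB" by (auto simp: reindexed_mat_def)
    have "M (fA i) (fB (j - nA)) = 0" if "i < nA" "\<not> j < nA"
      using zero bij_betwE[OF fA] bij_betwE[OF fB] that ij by auto
    thus "reindexed_mat f (nA + nB) M $$ (i, j)
        = four_block_mat (reindexed_mat fA nA M) (0\<^sub>m nA nB) ?C (reindexed_mat fB nB M) $$ (i, j)"
      using ij by (auto simp: reindexed_mat_def four_block_mat_def Let_def f_def)
  qed (auto simp: reindexed_mat_def)
  hence "det (reindexed_mat f (nA + nB) M) = det (reindexed_mat fA nA M) * det (reindexed_mat fB nB M)"
    by (simp add: det_four_block_mat_upper_right_zero[where n=nA and m=nB] reindexed_mat_def)
  thus ?thesis
    by (simp add: det_on_eq_det_reindexed_mat[OF f] det_on_eq_det_reindexed_mat[OF fA]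
        det_on_eq_det_reindexed_mat[OF fB])
qed

lemma sum_delta_left:
  "finite S \<Longrightarrow> i \<in> S \<Longrightarrow> (\<Sum>k\<in>S. (if i = k then 1 else 0) * (c k :: real)) = c i"
  by (simp add: if_distrib[of "\<lambda>t. t * _"] cong: if_cong)

lemma sum_delta_right:
  "finite S \<Longrightarrow> j \<in> S \<Longrightarrow> (\<Sum>k\<in>S. (c k :: real) * (if k = j then 1 else 0)) = c j"
  by (simp add: if_distrib[of "\<lambda>t. _ * t"] cong: if_cong)

lemma left_inverse_on_eq_right_inverse_on:
  fixes L M R :: "nat \<Rightarrow> nat \<Rightarrow> real"
  assumes S: "finite S"
    and L: "\<And>i j. i \<in> S \<Longrightarrow> j \<in> S \<Longrightarrow> (\<Sum>k\<in>S. L i k * M k j) = (if i = j then 1 else 0)"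
    and R: "\<And>i j. i \<in> S \<Longrightarrow> j \<in> S \<Longrightarrow> (\<Sum>k\<in>S. M i k * R k j) = (if i = j then 1 else 0)"
    and ij: "i \<in> S" "j \<in> S"
  shows "L i j = R i j"
proof -
  have "L i j = (\<Sum>l\<in>S. L i l * (\<Sum>k\<in>S. M l k * R k j))"
    using S ij by (simp add: R sum_delta_right)
  also have "\<dots> = (\<Sum>l\<in>S. \<Sum>k\<in>S. L i l * M l k * R k j)"
    by (simp add: sum_distrib_left mult.assoc)
  also have "\<dots> = (\<Sum>k\<in>S. (\<Sum>l\<in>S. L i l * M l k) * R k j)"
    by (subst sum.swap) (simp add: sum_distrib_right)
  also have "\<dots> = R i j"
    using S ij by (simp add: L sum_delta_left)
  finally show ?thesis .
qed

lemma inverse_on_exists: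
  assumes "finite S" and "det_on S M \<noteq> 0"
  shows "\<exists>B. (\<forall>i\<in>S. \<forall>j\<in>S. (\<Sum>k\<in>S. M i k * B k j) = (if i = j then 1 else 0))
           \<and> (\<forall>i\<in>S. \<forall>j\<in>S. (\<Sum>k\<in>S. B i k * M k j) = (if i = j then 1 else 0))
           \<and> (\<forall>i j. i \<notin> S \<or> j \<notin> S \<longrightarrow> B i j = 0)"
proof -
  define n where "n = card S"
  obtain f where f: "bij_betw f {0..<n} S"
    using ex_bij_betw_nat_finite[OF assms(1)] unfolding n_def by blast
  define A where "A = reindexed_mat f n M"
  have A: "A \<in> carrier_mat n n" by (simp add: A_def reindexed_mat_def)
  have "det A \<noteq> 0"
    using assms(2) by (simp add: A_def det_on_eq_det_reindexed_mat[OF f])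
  from det_non_zero_imp_unit[OF A this, of undefined]
  obtain C where C: "C \<in> carrier_mat n n" "C * A = 1\<^sub>m n" "A * C = 1\<^sub>m n"
    unfolding Units_def ring_mat_def by auto
  define g where "g = inv_into {0..<n} f"
  define B where "B = (\<lambda>i j. if i \<in> S \<and> j \<in> S then C $$ (g i, g j) else 0)"
  have "reindexed_mat f n B = C"
    using C(1) f by (intro eq_matI) (auto simp: reindexed_mat_def B_def g_def bij_betwE bij_betw_inv_into_left)
  hence "reindexed_mat f n (\<lambda>i j. \<Sum>k\<in>S. M i k * B k j) = reindexed_mat f n (\<lambda>i j. if i = j then 1 else 0)"
    and "reindexed_mat f n (\<lambda>i j. \<Sum>k\<in>S. B i k * M k j) = reindexed_mat f n (\<lambda>i j. if i = j then 1 else 0)"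
    using C f by (simp_all add: reindexed_mat_mult reindexed_mat_id bij_betw_imp_inj_on A_def[symmetric])
  hence "\<forall>i\<in>S. \<forall>j\<in>S. (\<Sum>k\<in>S. M i k * B k j) = (if i = j then 1 else 0)"
    and "\<forall>i\<in>S. \<forall>j\<in>S. (\<Sum>k\<in>S. B i k * M k j) = (if i = j then 1 else 0)"
    using reindexed_mat_eqD[OF f] by blast+
  moreover have "\<forall>i j. i \<notin> S \<or> j \<notin> S \<longrightarrow> B i j = 0"
    by (simp add: B_def)
  ultimately show ?thesis by blast
qed

lemma inv_on_inverse:
  assumes S: "finite S" and "det_on S M \<noteq> 0"
  shows "\<forall>i\<in>S. \<forall>j\<in>S. (\<Sum>k\<in>S. M i k * inv_on S M k j) = (if i = j then 1 else 0)"
    and "\<forall>i\<in>S. \<forall>j\<in>S. (\<Sum>k\<in>S. inv_on S M i k * M k j) = (if i = j then 1 else 0)"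
proof -
  obtain B where R: "\<forall>i\<in>S. \<forall>j\<in>S. (\<Sum>k\<in>S. M i k * B k j) = (if i = j then 1 else 0)"
    and L: "\<forall>i\<in>S. \<forall>j\<in>S. (\<Sum>k\<in>S. B i k * M k j) = (if i = j then 1 else 0)"
    and Z: "\<forall>i j. i \<notin> S \<or> j \<notin> S \<longrightarrow> B i j = 0"
    using inverse_on_exists[OF assms] by blast
  have "inv_on S M = B"
    unfolding inv_on_def
  proof (rule the_equality)
    fix B' assume B': "(\<forall>i\<in>S. \<forall>j\<in>S. (\<Sum>k\<in>S. M i k * B' k j) = (if i = j then 1 else 0))
        \<and> (\<forall>i j. i \<notin> S \<or> j \<notin> S \<longrightarrow> B' i j = 0)"
    show "B' = B"
    proof (intro ext)
      fix i j show "B' i j = B i j"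
      proof (cases "i \<in> S \<and> j \<in> S")
        case True
        have "B i j = B' i j"
          by (rule left_inverse_on_eq_right_inverse_on[OF S, where M=M]) (use L B' True in auto)
        thus ?thesis by simp
      qed (use B' Z in auto)
    qed
  qed (use R Z in blast)
  thus "\<forall>i\<in>S. \<forall>j\<in>S. (\<Sum>k\<in>S. M i k * inv_on S M k j) = (if i = j then 1 else 0)"
    and "\<forall>i\<in>S. \<forall>j\<in>S. (\<Sum>k\<in>S. inv_on S M i k * M k j) = (if i = j then 1 else 0)"
    using R L by simp_all
qed

lemma inv_on_sym:
  assumes S: "finite S" "det_on S M \<noteq> 0" and sym: "\<forall>i\<in>S. \<forall>j\<in>S. M i j = M j i"
    and ij: "i \<in> S" "j \<in> S"
  shows "inv_on S M i j = inv_on S M j i"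
proof -
  have "(\<Sum>k\<in>S. inv_on S M k i * M k j) = (if i = j then 1 else 0)" if "i \<in> S" "j \<in> S" for i j
  proof -
    have "(\<Sum>k\<in>S. inv_on S M k i * M k j) = (\<Sum>k\<in>S. M j k * inv_on S M k i)"
      using sym that by (intro sum.cong) auto
    thus ?thesis using inv_on_inverse(1)[OF S] that by auto
  qed
  thus ?thesis
    using left_inverse_on_eq_right_inverse_on[OF S(1), of "\<lambda>i j. inv_on S M j i" M "inv_on S M" i j]
      inv_on_inverse(1)[OF S] ij
    by simp
qed

lemma partial_cov_eq_zero_left:
  assumes B: "finite B" "det_on B M \<noteq> 0" and "k \<in> B"
  shows "partial_cov M B k j = 0"
proof -
  have "(\<Sum>l\<in>B. \<Sum>m\<in>B. M k l * inv_on B M l m * M m j) = (\<Sum>m\<in>B. (\<Sum>l\<in>B. M k l * inv_on B M l m) * M m j)"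
    by (subst sum.swap) (simp add: sum_distrib_right)
  also have "\<dots> = M k j"
    using inv_on_inverse(1)[OF B] assms by (simp add: sum_delta_left)
  finally show ?thesis by (simp add: partial_cov_def)
qed

lemma partial_cov_eq_zero_right:
  assumes B: "finite B" "det_on B M \<noteq> 0" and "b \<in> B"
  shows "partial_cov M B i b = 0"
proof -
  have "(\<Sum>l\<in>B. \<Sum>m\<in>B. M i l * inv_on B M l m * M m b) = (\<Sum>l\<in>B. M i l * (\<Sum>m\<in>B. inv_on B M l m * M m b))"
    by (simp add: sum_distrib_left mult.assoc)
  also have "\<dots> = M i b"
    using inv_on_inverse(2)[OF B] assms by (simp add: sum_delta_right)
  finally show ?thesis by (simp add: partial_cov_def)
qed

lemma partial_cov_sym:
  assumes B: "finite B" "det_on B M \<noteq> 0" and sym: "\<forall>i\<in>S. \<forall>j\<in>S. M i j = M j i"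
    and "B \<subseteq> S" "i \<in> S" "j \<in> S"
  shows "partial_cov M B i j = partial_cov M B j i"
proof -
  have "(\<Sum>k\<in>B. \<Sum>l\<in>B. M i k * inv_on B M k l * M l j) = (\<Sum>l\<in>B. \<Sum>k\<in>B. M i k * inv_on B M k l * M l j)"
    by (rule sum.swap)
  also have "\<dots> = (\<Sum>l\<in>B. \<Sum>k\<in>B. M j l * inv_on B M l k * M k i)"
    using assms inv_on_sym[OF B] by (intro sum.cong refl) (auto simp: mult_ac subset_iff)
  finally show ?thesis
    using assms by (simp add: partial_cov_def)
qed

lemma det_on_schur_complement:
  assumes S: "finite S" "A \<union> B = S" "A \<inter> B = {}" and B: "det_on B M \<noteq> 0"
  shows "det_on S M = det_on B M * det_on A (partial_cov M B)"
proof -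
  have finA: "finite A" and finB: "finite B" using S by auto
  define C where "C = (\<lambda>i j. if i \<in> A \<and> j \<in> B then \<Sum>l\<in>B. M i l * inv_on B M l j else 0)"
  \<comment> \<open>Gaussian elimination: T M has the rows of partial_cov M B on A and is block triangular.\<close>
  define T where "T = (\<lambda>i j. (if i = j then 1 else 0) - C i j)"
  have TM: "(\<Sum>k\<in>S. T i k * M k j) = (if i \<in> A then partial_cov M B i j else M i j)"
    if "i \<in> S" for i j
  proof -
    have "(\<Sum>k\<in>S. C i k * M k j) = (\<Sum>k\<in>B. C i k * M k j)"
      by (rule sum.mono_neutral_right) (use S in \<open>auto simp: C_def\<close>)
    also have "\<dots> = (if i \<in> A then \<Sum>l\<in>B. \<Sum>k\<in>B. M i l * inv_on B M l k * M k j else 0)"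
      by (subst sum.swap) (simp add: C_def sum_distrib_right)
    finally show ?thesis
      using S that by (simp add: T_def left_diff_distrib sum_subtractf sum_delta_left partial_cov_def)
  qed
  have "det_on S T = det_on B T * det_on A T"
    by (rule det_on_block_triangular) (use S in \<open>auto simp: T_def C_def\<close>)
  also have "det_on B T = det_on B (\<lambda>i j. if i = j then 1 else 0)"
    by (rule det_on_cong) (use S in \<open>auto simp: T_def C_def\<close>)
  also have "det_on A T = det_on A (\<lambda>i j. if i = j then 1 else 0)"
    by (rule det_on_cong) (use S in \<open>auto simp: T_def C_def\<close>)
  finally have "det_on S T = 1"
    by (simp add: det_on_id[OF finA] det_on_id[OF finB])
  hence "det_on S M = det_on S (\<lambda>i j. \<Sum>k\<in>S. T i k * M k j)"
    by (simp add: det_on_mult[OF S(1)])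
  also have "\<dots> = det_on A (\<lambda>i j. \<Sum>k\<in>S. T i k * M k j) * det_on B (\<lambda>i j. \<Sum>k\<in>S. T i k * M k j)"
    by (rule det_on_block_triangular[OF S]) (use S TM partial_cov_eq_zero_right[OF finB B] in auto)
  also have "\<dots> = det_on A (partial_cov M B) * det_on B M"
    using S TM by (auto intro!: arg_cong2[where f="(*)"] det_on_cong)
  finally show ?thesis by simp
qed

lemma partial_cov_quad_form:
  fixes A B :: "nat set" and M :: "nat \<Rightarrow> nat \<Rightarrow> real" and z :: "nat \<Rightarrow> real"
  defines "v \<equiv> \<lambda>k. \<Sum>l\<in>B. inv_on B M k l * (\<Sum>j\<in>A. M l j * z j)"
  shows "(\<Sum>i\<in>A. \<Sum>j\<in>A. z i * partial_cov M B i j * z j)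
       = (\<Sum>i\<in>A. \<Sum>j\<in>A. z i * M i j * z j) - (\<Sum>i\<in>A. \<Sum>k\<in>B. z i * M i k * v k)"
proof -
  have "(\<Sum>j\<in>A. z i * (\<Sum>k\<in>B. \<Sum>l\<in>B. M i k * inv_on B M k l * M l j) * z j)
      = (\<Sum>k\<in>B. z i * M i k * v k)" for i
  proof -
    have "(\<Sum>j\<in>A. z i * (\<Sum>k\<in>B. \<Sum>l\<in>B. M i k * inv_on B M k l * M l j) * z j)
        = (\<Sum>j\<in>A. \<Sum>k\<in>B. \<Sum>l\<in>B. z i * M i k * inv_on B M k l * M l j * z j)"
      by (simp add: sum_distrib_left sum_distrib_right mult.assoc)
    also have "\<dots> = (\<Sum>k\<in>B. \<Sum>l\<in>B. \<Sum>j\<in>A. z i * M i k * inv_on B M k l * M l j * z j)"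
      by (simp only: sum.swap[of _ A B])
    also have "\<dots> = (\<Sum>k\<in>B. z i * M i k * v k)"
      by (simp add: v_def sum_distrib_left mult.assoc)
    finally show ?thesis .
  qed
  thus ?thesis
    by (simp add: partial_cov_def right_diff_distrib left_diff_distrib sum_subtractf)
qed

lemma partial_cov_cross_term:
  fixes A B :: "nat set" and M :: "nat \<Rightarrow> nat \<Rightarrow> real" and z :: "nat \<Rightarrow> real"
  assumes B: "finite B" "det_on B M \<noteq> 0" and sym: "\<forall>i\<in>S. \<forall>j\<in>S. M i j = M j i"
    and "A \<subseteq> S" "B \<subseteq> S"
  defines "v \<equiv> \<lambda>k. \<Sum>l\<in>B. inv_on B M k l * (\<Sum>j\<in>A. M l j * z j)"
  shows "(\<Sum>i\<in>A. \<Sum>k\<in>B. z i * M i k * v k) = (\<Sum>k\<in>B. \<Sum>l\<in>B. v k * M k l * v l)"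
proof -
  have Mv: "(\<Sum>l\<in>B. M k l * v l) = (\<Sum>j\<in>A. M k j * z j)" if "k \<in> B" for k
  proof -
    let ?u = "\<lambda>m. \<Sum>j\<in>A. M m j * z j"
    have "(\<Sum>l\<in>B. M k l * v l) = (\<Sum>l\<in>B. \<Sum>m\<in>B. M k l * inv_on B M l m * ?u m)"
      by (simp add: v_def sum_distrib_left mult.assoc)
    also have "\<dots> = (\<Sum>m\<in>B. (\<Sum>l\<in>B. M k l * inv_on B M l m) * ?u m)"
      by (subst sum.swap) (simp add: sum_distrib_right)
    finally show ?thesis
      using inv_on_inverse(1)[OF B] that B(1) by (simp add: sum_delta_left)
  qed
  have "(\<Sum>i\<in>A. \<Sum>k\<in>B. z i * M i k * v k) = (\<Sum>k\<in>B. \<Sum>i\<in>A. M k i * z i * v k)"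
    using sym assms(4,5) by (subst sum.swap) (auto simp: subset_iff intro!: sum.cong)
  also have "\<dots> = (\<Sum>k\<in>B. (\<Sum>j\<in>A. M k j * z j) * v k)"
    by (simp add: sum_distrib_right)
  also have "\<dots> = (\<Sum>k\<in>B. (\<Sum>l\<in>B. M k l * v l) * v k)"
    using Mv by simp
  also have "\<dots> = (\<Sum>k\<in>B. \<Sum>l\<in>B. v k * M k l * v l)"
    by (intro sum.cong refl) (simp add: sum_distrib_left sum_distrib_right mult_ac)
  finally show ?thesis .
qed

lemma quad_form_union:
  fixes w :: "nat \<Rightarrow> real"
  assumes "finite A" "finite B" "A \<inter> B = {}" and sym: "\<forall>i\<in>A \<union> B. \<forall>j\<in>A \<union> B. M i j = M j i"
  shows "(\<Sum>i\<in>A \<union> B. \<Sum>j\<in>A \<union> B. w i * M i j * w j)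
       = (\<Sum>i\<in>A. \<Sum>j\<in>A. w i * M i j * w j) + 2 * (\<Sum>i\<in>A. \<Sum>j\<in>B. w i * M i j * w j)
         + (\<Sum>i\<in>B. \<Sum>j\<in>B. w i * M i j * w j)"
proof -
  have "(\<Sum>i\<in>B. \<Sum>j\<in>A. w i * M i j * w j) = (\<Sum>i\<in>A. \<Sum>j\<in>B. w i * M i j * w j)"
    using sym by (subst sum.swap) (auto simp: mult_ac intro!: sum.cong)
  thus ?thesis
    using assms by (simp add: sum.union_disjoint sum.distrib)
qed

lemma pos_def_on_quad_nonneg:
  assumes "pos_def_on S M"
  shows "0 \<le> (\<Sum>i\<in>S. \<Sum>j\<in>S. z i * M i j * z j)"
proof (cases "\<exists>i\<in>S. z i \<noteq> 0")
  case True
  thus ?thesis using assms unfolding pos_def_on_def by (blast intro: less_imp_le)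
qed simp

lemma pos_def_on_subset:
  assumes pd: "pos_def_on S M" and "T \<subseteq> S" "finite S"
  shows "pos_def_on T M"
  unfolding pos_def_on_def
proof (intro conjI allI impI)
  show "\<forall>i\<in>T. \<forall>j\<in>T. M i j = M j i" using pd \<open>T \<subseteq> S\<close> unfolding pos_def_on_def by blast
next
  fix z :: "nat \<Rightarrow> real" assume "\<exists>i\<in>T. z i \<noteq> 0"
  define z' where "z' = (\<lambda>i. if i \<in> T then z i else 0)"
  have "\<exists>i\<in>S. z' i \<noteq> 0"
    using \<open>\<exists>i\<in>T. z i \<noteq> 0\<close> \<open>T \<subseteq> S\<close> by (auto simp: z'_def)
  hence "0 < (\<Sum>i\<in>S. \<Sum>j\<in>S. z' i * M i j * z' j)"
    using pd unfolding pos_def_on_def by blast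
  also have "(\<Sum>i\<in>S. \<Sum>j\<in>S. z' i * M i j * z' j) = (\<Sum>i\<in>S. \<Sum>j\<in>T. z' i * M i j * z' j)"
    by (intro sum.cong refl sum.mono_neutral_right assms) (auto simp: z'_def)
  also have "\<dots> = (\<Sum>i\<in>T. \<Sum>j\<in>T. z' i * M i j * z' j)"
    by (intro sum.mono_neutral_right assms) (auto simp: z'_def)
  finally show "0 < (\<Sum>i\<in>T. \<Sum>j\<in>T. z i * M i j * z j)"
    by (simp add: z'_def cong: sum.cong)
qed

lemma partial_cov_quad_pos:
  fixes z :: "nat \<Rightarrow> real"
  assumes S: "finite S" "A \<union> B = S" "A \<inter> B = {}" and pd: "pos_def_on S M"
    and B: "det_on B M \<noteq> 0" and nz: "\<exists>i\<in>A. z i \<noteq> 0"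
  shows "0 < (\<Sum>i\<in>A. \<Sum>j\<in>A. z i * partial_cov M B i j * z j)"
proof -
  have finA: "finite A" and finB: "finite B" and AB: "A \<subseteq> S" "B \<subseteq> S" using S by auto
  have sym: "\<forall>i\<in>S. \<forall>j\<in>S. M i j = M j i" using pd unfolding pos_def_on_def by blast
  define v where "v = (\<lambda>k. \<Sum>l\<in>B. inv_on B M k l * (\<Sum>j\<in>A. M l j * z j))"
  \<comment> \<open>Extending z by -\<Sigma>_BB^-1 \<Sigma>_BA z turns the quadratic form of M into that of partial_cov M B.\<close>
  define w where "w = (\<lambda>i. if i \<in> A then z i else - v i)"
  have wA: "w i = z i" if "i \<in> A" for i using that by (simp add: w_def)
  have wB: "w i = - v i" if "i \<in> B" for i using that S(3) by (auto simp: w_def)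
  have "\<exists>i\<in>S. w i \<noteq> 0" using nz S by (auto simp: w_def)
  hence "0 < (\<Sum>i\<in>S. \<Sum>j\<in>S. w i * M i j * w j)"
    using pd unfolding pos_def_on_def by blast
  also have "(\<Sum>i\<in>S. \<Sum>j\<in>S. w i * M i j * w j)
      = (\<Sum>i\<in>A. \<Sum>j\<in>A. w i * M i j * w j) + 2 * (\<Sum>i\<in>A. \<Sum>j\<in>B. w i * M i j * w j)
        + (\<Sum>i\<in>B. \<Sum>j\<in>B. w i * M i j * w j)"
    using quad_form_union[OF finA finB S(3)] sym S(2) by blast
  also have "\<dots> = (\<Sum>i\<in>A. \<Sum>j\<in>A. z i * M i j * z j) - 2 * (\<Sum>i\<in>A. \<Sum>k\<in>B. z i * M i k * v k)
        + (\<Sum>k\<in>B. \<Sum>l\<in>B. v k * M k l * v l)"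
    by (simp add: wA wB sum_negf cong: sum.cong)
  also have "\<dots> = (\<Sum>i\<in>A. \<Sum>j\<in>A. z i * partial_cov M B i j * z j)"
    using partial_cov_cross_term[OF finB B sym AB, where z=z] partial_cov_quad_form[where A=A and B=B and M=M and z=z] S
    by (simp add: v_def)
  finally show ?thesis .
qed

lemma pos_def_on_det_pos:
  assumes "finite S" and "pos_def_on S M"
  shows "0 < det_on S M"
  using assms
proof (induction S rule: finite_induct)
  case empty
  show ?case by simp
next
  case (insert s F)
  have dF: "0 < det_on F M"
    using insert.IH pos_def_on_subset[OF insert.prems] insert.hyps by blast
  have F: "{s} \<union> F = insert s F" "{s} \<inter> F = {}" using insert.hyps by auto
  have "0 < partial_cov M F s s"
    using partial_cov_quad_pos[OF _ F insert.prems, of "\<lambda>i. if i = s then 1 else 0"] insert.hyps dF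
    by simp
  moreover have "det_on (insert s F) M = det_on F M * partial_cov M F s s"
    using det_on_schur_complement[OF _ F] insert.hyps dF by (simp add: det_on_singleton)
  ultimately show ?case using dF by simp
qed

lemma pos_def_on_partial_cov:
  assumes S: "finite S" "A \<union> B = S" "A \<inter> B = {}" and pd: "pos_def_on S M"
  shows "pos_def_on A (partial_cov M B)"
proof -
  have pdB: "pos_def_on B M" using pos_def_on_subset[OF pd] S by blast
  have B: "finite B" "det_on B M \<noteq> 0"
    using S pos_def_on_det_pos[OF _ pdB] by auto
  have "\<forall>i\<in>S. \<forall>j\<in>S. M i j = M j i" using pd unfolding pos_def_on_def by blast
  thus ?thesis
    unfolding pos_def_on_def
    using partial_cov_sym[OF B] partial_cov_quad_pos[OF S pd B(2)] S by blast
qed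

lemma partial_cov_quad_le:
  fixes z :: "nat \<Rightarrow> real"
  assumes S: "finite S" "A \<union> B = S" "A \<inter> B = {}" and pd: "pos_def_on S M"
  shows "(\<Sum>i\<in>A. \<Sum>j\<in>A. z i * partial_cov M B i j * z j) \<le> (\<Sum>i\<in>A. \<Sum>j\<in>A. z i * M i j * z j)"
proof -
  have pdB: "pos_def_on B M" using pos_def_on_subset[OF pd] S by blast
  have B: "finite B" "det_on B M \<noteq> 0"
    using S pos_def_on_det_pos[OF _ pdB] by auto
  have sym: "\<forall>i\<in>S. \<forall>j\<in>S. M i j = M j i" using pd unfolding pos_def_on_def by blast
  have AB: "A \<subseteq> S" "B \<subseteq> S" using S by auto
  show ?thesis
    using partial_cov_quad_form[where A=A and B=B and M=M and z=z]
      partial_cov_cross_term[OF B sym AB, where z=z] pos_def_on_quad_nonneg[OF pdB]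
    by simp
qed

lemma inv_on_block_partial_cov:
  assumes S: "finite S" "A \<union> B = S" "A \<inter> B = {}"
    and dS: "det_on S M \<noteq> 0" and dB: "det_on B M \<noteq> 0" and ij: "i \<in> A" "j \<in> A"
  shows "(\<Sum>k\<in>A. inv_on S M i k * partial_cov M B k j) = (if i = j then 1 else 0)"
proof -
  have finB: "finite B" using S by auto
  have K: "(\<Sum>k\<in>S. inv_on S M i k * M k l) = (if i = l then 1 else 0)" if "l \<in> S" for l
    using inv_on_inverse(2)[OF S(1) dS] ij S that by blast
  have K0: "(\<Sum>k\<in>S. inv_on S M i k * M k l) = 0" if "l \<in> B" for l
    using K[of l] that ij S by auto
  have "(\<Sum>k\<in>A. inv_on S M i k * partial_cov M B k j) = (\<Sum>k\<in>S. inv_on S M i k * partial_cov M B k j)"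
    by (rule sum.mono_neutral_left) (use S partial_cov_eq_zero_left[OF finB dB] in auto)
  also have "\<dots> = (\<Sum>k\<in>S. inv_on S M i k * M k j)
      - (\<Sum>l\<in>B. \<Sum>m\<in>B. (\<Sum>k\<in>S. inv_on S M i k * M k l) * inv_on B M l m * M m j)"
    by (simp add: partial_cov_def right_diff_distrib sum_subtractf sum_distrib_left sum_distrib_right
        mult.assoc sum.swap[of _ S B])
  also have "\<dots> = (if i = j then 1 else 0)"
    using K[of j] ij S by (auto simp: K0 cong: sum.cong)
  finally show ?thesis .
qed

lemma inverse_on_doubleton_offdiag:
  fixes K P :: "nat \<Rightarrow> nat \<Rightarrow> real"
  assumes "x \<noteq> y" and "P y x = P x y"
    and K: "\<And>i j. i \<in> {x, y} \<Longrightarrow> j \<in> {x, y} \<Longrightarrow> (\<Sum>k\<in>{x, y}. K i k * P k j) = (if i = j then 1 else 0)"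
  shows "K x y * det_on {x, y} P = - P x y"
proof -
  have "K x x * P x x + K x y * P x y = 1" and "K x x * P x y + K x y * P y y = 0"
    using K[of x x] K[of x y] assms by simp_all
  moreover have "K x y * (P x x * P y y - P x y * P x y)
      = P x x * (K x x * P x y + K x y * P y y) - P x y * (K x x * P x x + K x y * P x y)"
    by (simp add: algebra_simps)
  ultimately have "K x y * (P x x * P y y - P x y * P x y) = - P x y"
    by simp
  thus ?thesis using assms by (simp add: det_on_doubleton)
qed

lemma det2_le_det2_add_psd:
  fixes a b c d e f :: real
  assumes "0 < a" "0 < a * c - b * b"
    and psd: "\<And>s t. 0 \<le> d * s * s + 2 * e * s * t + f * t * t"
  shows "a * c - b * b \<le> (a + d) * (c + f) - (b + e) * (b + e)"
proof -
  have "0 < a * c" using assms(2) zero_le_square[of b] by linarith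
  hence c: "0 < c" using zero_less_mult_pos assms(1) by blast
  have d: "0 \<le> d" and f: "0 \<le> f" using psd[of 1 0] psd[of 0 1] by simp_all
  consider "0 < d" | "0 < f" | "d = 0" "f = 0" using d f by linarith
  hence "0 \<le> d * f - e * e"
  proof cases
    case 1
    moreover have "0 \<le> d * (d * f - e * e)" using psd[of e "- d"] by (simp add: algebra_simps)
    ultimately show ?thesis by (simp add: zero_le_mult_iff)
  next
    case 2
    moreover have "0 \<le> f * (d * f - e * e)" using psd[of f "- e"] by (simp add: algebra_simps)
    ultimately show ?thesis by (simp add: zero_le_mult_iff)
  next
    case 3
    thus ?thesis using psd[of 1 "- e"] by (auto simp: mult_le_0_iff)
  qed
  moreover have "0 \<le> c * (a * f + c * d - 2 * b * e)"
  proof -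
    have "c * (a * f + c * d - 2 * b * e) = f * (a * c - b * b) + (d * c * c + 2 * e * c * (- b) + f * (- b) * (- b))"
      by (simp add: algebra_simps)
    thus ?thesis using psd[of c "- b"] f assms(2) by simp
  qed
  hence "0 \<le> a * f + c * d - 2 * b * e" using c by (simp add: zero_le_mult_iff)
  ultimately show ?thesis by (simp add: algebra_simps)
qed

lemma det_on_doubleton_mono:
  assumes xy: "x \<noteq> y" and P: "pos_def_on {x, y} P" and M: "M y x = M x y"
    and le: "\<And>z. (\<Sum>i\<in>{x, y}. \<Sum>j\<in>{x, y}. z i * P i j * z j) \<le> (\<Sum>i\<in>{x, y}. \<Sum>j\<in>{x, y}. z i * M i j * z j)"
  shows "det_on {x, y} P \<le> det_on {x, y} M"
proof -
  have Psym: "P y x = P x y" using P unfolding pos_def_on_def by blast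
  have "0 < P x x"
    using P xy unfolding pos_def_on_def by (auto dest!: spec[of _ "\<lambda>i. if i = x then 1 else 0"])
  moreover have "0 < P x x * P y y - P x y * P x y"
    using pos_def_on_det_pos[OF _ P] xy Psym by (simp add: det_on_doubleton)
  moreover have "0 \<le> (M x x - P x x) * s * s + 2 * (M x y - P x y) * s * t + (M y y - P y y) * t * t" for s t
    using le[of "\<lambda>i. if i = x then s else t"] xy M Psym by (simp add: algebra_simps)
  ultimately show ?thesis
    using det2_le_det2_add_psd[of "P x x" "P y y" "P x y" "M x x - P x x" "M x y - P x y" "M y y - P y y"]
      xy M Psym by (simp add: det_on_doubleton)
qed

lemma alienation_eq_det_partial_cov:
  assumes "finite (A \<union> B)" "A \<inter> B = {}" "det_on B M \<noteq> 0"
  shows "alienation M A B = det_on A (partial_cov M B) / det_on A M"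
  using det_on_schur_complement[OF assms(1) refl assms(2,3)] assms(3)
  by (simp add: alienation_def)

lemma one_minus_vec_corr_sq:
  assumes "det_on A M \<noteq> 0" "det_on B M \<noteq> 0" "alienation M A B \<le> 1"
  shows "1 - (vec_corr M A B)\<^sup>2 = alienation M A B"
  using assms by (auto simp: vec_corr_def alienation_def)

lemma inv_on_offdiag_partial_cov:
  assumes "finite V" and pd: "pos_def_on V M" and xy: "x \<noteq> y" "x \<in> V" "y \<in> V"
  defines "P \<equiv> partial_cov M (V - {x, y})"
  shows "inv_on V M x y * det_on {x, y} P = - P x y"
proof -
  have V: "finite V" "{x, y} \<union> (V - {x, y}) = V" "{x, y} \<inter> (V - {x, y}) = {}"
    using assms by auto
  have "pos_def_on {x, y} P"
    unfolding P_def by (rule pos_def_on_partial_cov[OF V pd])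
  hence "P y x = P x y" unfolding pos_def_on_def by blast
  moreover have "0 < det_on V M" "0 < det_on (V - {x, y}) M"
    using pos_def_on_det_pos[OF _ pos_def_on_subset[OF pd]] V by auto
  ultimately show ?thesis
    using inverse_on_doubleton_offdiag[OF xy(1)] inv_on_block_partial_cov[OF V] by (simp add: P_def)
qed

lemma one_minus_vec_corr_sq_pair:
  assumes "finite V" and pd: "pos_def_on V M" and xy: "x \<noteq> y" "x \<in> V" "y \<in> V"
  defines "P \<equiv> partial_cov M (V - {x, y})"
  shows "1 - (vec_corr M {x, y} (V - {x, y}))\<^sup>2 = det_on {x, y} P / det_on {x, y} M"
proof -
  have V: "finite V" "{x, y} \<union> (V - {x, y}) = V" "{x, y} \<inter> (V - {x, y}) = {}"
    using assms by auto
  have pdP: "pos_def_on {x, y} P"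
    unfolding P_def by (rule pos_def_on_partial_cov[OF V pd])
  have det_pos: "0 < det_on {x, y} M" "0 < det_on (V - {x, y}) M"
    using pos_def_on_det_pos[OF _ pos_def_on_subset[OF pd]] V xy by auto
  have "M y x = M x y" using pd xy unfolding pos_def_on_def by blast
  hence "det_on {x, y} P \<le> det_on {x, y} M"
    using det_on_doubleton_mono[OF xy(1) pdP] partial_cov_quad_le[OF V pd] by (simp add: P_def)
  moreover have "alienation M {x, y} (V - {x, y}) = det_on {x, y} P / det_on {x, y} M"
    using alienation_eq_det_partial_cov V det_pos by (simp add: P_def)
  ultimately show ?thesis
    using one_minus_vec_corr_sq det_pos by simp
qed

theorem theorem2:
  fixes p :: nat and \<Sigma> :: "nat \<Rightarrow> nat \<Rightarrow> real" and E :: "nat set set" and x y :: nat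
  defines "V \<equiv> {1..p}"
  assumes pd: "pos_def_on V \<Sigma>"
    and graph: "E \<subseteq> {{u, v} | u v. u \<in> V \<and> v \<in> V \<and> u \<noteq> v}"
    and implies: "\<forall>u\<in>V. \<forall>v\<in>V. u \<noteq> v \<and> inv_on V \<Sigma> u v \<noteq> 0 \<longrightarrow> {u, v} \<in> E"
    and edge: "{x, y} \<in> E"
  shows "path_weight V [x, y] \<Sigma> =
           partial_cov \<Sigma> (V - {x, y}) x y / (1 - (vec_corr \<Sigma> {x, y} (V - {x, y}))\<^sup>2)"
proof -
  have xy: "x \<noteq> y" "x \<in> V" "y \<in> V"
    using graph edge by (auto simp: doubleton_eq_iff)
  have V: "finite V" by (simp add: V_def)
  define P where "P = partial_cov \<Sigma> (V - {x, y})"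
  have "{x, y} \<union> (V - {x, y}) = V" "{x, y} \<inter> (V - {x, y}) = {}"
    using xy by auto
  hence "pos_def_on {x, y} P"
    unfolding P_def using pos_def_on_partial_cov[OF V _ _ pd] by blast
  hence det_P: "0 < det_on {x, y} P"
    by (simp add: pos_def_on_det_pos)
  have P_xy: "P x y = - inv_on V \<Sigma> x y * det_on {x, y} P"
    using inv_on_offdiag_partial_cov[OF V pd xy] by (simp add: P_def)
  have "path_weight V [x, y] \<Sigma> = - inv_on V \<Sigma> x y * det_on {x, y} \<Sigma>"
    using xy by (simp add: path_weight_def)
  also have "\<dots> = P x y / (det_on {x, y} P / det_on {x, y} \<Sigma>)"
    using det_P by (simp add: P_xy)
  also have "\<dots> = P x y / (1 - (vec_corr \<Sigma> {x, y} (V - {x, y}))\<^sup>2)"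
    using one_minus_vec_corr_sq_pair[OF V pd xy] by (simp add: P_def)
  finally show ?thesis by (simp add: P_def)
qed

end
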